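(* Let $\mathcal{X}\subset\mathbb{R}$ be closed and $H\ge1$. For any $f_0\in\mathcal{F}^H$ and any $\epsilon>0$ there exist a knot set $\mathcal{T}$ and a local extrema spline $f^{LX}$ defined on $\mathcal{T}$ such that $\|f_0-f^{LX}\|_\infty<\epsilon$, where $\|g\|_\infty=\sup_{x\in\mathcal{X}}|g(x)|$.
   Context: $\mathcal{F}^{H}$ is the set of continuously differentiable functions $f:\mathcal{X}\to\mathbb{R}$ having $H$ or fewer local extrema interior to $\mathcal{X}$. A local extrema spline on a knot set $\mathcal{T}=\{\tau_k\}_{k=1}^K$ ($\tau_1\le\dots\le\tau_K$, including end knots) is a function $f(x)=\sum_{k=0}^{K+j-1}\beta_kB^{\ast}_{(j,k)}(x)$, for some order $j\ge1$, with $\beta_0\in\mathbb{R}$, $\beta_k\ge0$ for $k\ge1$, where $B^{\ast}_{(j,0)}=1$ and $B^{\ast}_{(j,k)}(x)=M\int_{-\infty}^x\{\prod_{h=1}^H(\xi-\alpha_h)\}B_{(j,k)}(\xi)\,d\xi$ for $k\ge1$, with $B_{(j,k)}$ the order-$j$ B-spline basis functions on $\mathcal{T}$, $\alpha_1,\dots,\alpha_H$ distinct real numbers (change points, which may lie outside $\mathcal{X}$), and $M\in\{-1,1\}$ (which may be chosen to be either sign). *)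

theory Defs
  imports "HOL-Analysis.Analysis"
begin

text \<open>Domain X = {a..b} (closed bounded interval). Continuously differentiable on X:
  a derivative exists on X (one-sided at the end points) and is continuous on X.\<close>
definition C1_on :: "real set \<Rightarrow> (real \<Rightarrow> real) \<Rightarrow> bool" where
  "C1_on X f \<longleftrightarrow> (\<exists>f'. (\<forall>x\<in>X. (f has_real_derivative f' x) (at x within X))
                          \<and> continuous_on X f')"

definition local_extremum :: "(real \<Rightarrow> real) \<Rightarrow> real \<Rightarrow> bool" where
  "local_extremum f x \<longleftrightarrow>
     (\<exists>e>0. \<forall>y. \<bar>y - x\<bar> < e \<longrightarrow> f y \<le> f x) \<or>
     (\<exists>e>0. \<forall>y. \<bar>y - x\<bar> < e \<longrightarrow> f x \<le> f y)"

definition FH :: "nat \<Rightarrow> real set \<Rightarrow> (real \<Rightarrow> real) set" where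
  "FH H X = {f. C1_on X f \<and>
     finite {x \<in> interior X. local_extremum f x} \<and>
     card {x \<in> interior X. local_extremum f x} \<le> H}"

text \<open>B-splines via the Cox--de Boor recursion on an (extended) knot sequence t.
  Convention: division by zero gives 0 (Isabelle), matching the usual 0/0 = 0 convention.\<close>
fun bspl :: "(nat \<Rightarrow> real) \<Rightarrow> nat \<Rightarrow> nat \<Rightarrow> real \<Rightarrow> real" where
  "bspl t 0 i x = 0"
| "bspl t (Suc 0) i x = (if t i \<le> x \<and> x < t (Suc i) then 1 else 0)"
| "bspl t (Suc (Suc j)) i x =
     (x - t i) / (t (i + Suc j) - t i) * bspl t (Suc j) i x
   + (t (i + Suc (Suc j)) - x) / (t (i + Suc (Suc j)) - t (Suc i)) * bspl t (Suc j) (Suc i) x"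

text \<open>Clamped extension of the knot list tau = [tau_1,...,tau_K] for order j:
  tau_1 repeated j times at the left, tau_K repeated (indefinitely) at the right.\<close>
definition ext_knots :: "nat \<Rightarrow> real list \<Rightarrow> nat \<Rightarrow> real" where
  "ext_knots j tau i = tau ! min (length tau - 1) (i - (j - 1))"

definition Bsp :: "nat \<Rightarrow> real list \<Rightarrow> nat \<Rightarrow> real \<Rightarrow> real" where
  "Bsp j tau k x = bspl (ext_knots j tau) j (k - 1) x"

definition Bstar :: "nat \<Rightarrow> (nat \<Rightarrow> real) \<Rightarrow> real \<Rightarrow> nat \<Rightarrow> real list \<Rightarrow> nat \<Rightarrow> real \<Rightarrow> real" where
  "Bstar H alpha M j tau k x =
     (if k = 0 then 1
      else M * integral {..x} (\<lambda>\<xi>. (\<Prod>h=1..H. \<xi> - alpha h) * Bsp j tau k \<xi>))"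

definition lx_spline :: "nat \<Rightarrow> real list \<Rightarrow> (real \<Rightarrow> real) \<Rightarrow> bool" where
  "lx_spline H tau f \<longleftrightarrow> sorted tau \<and> length tau \<ge> 2 \<and>
     (\<exists>(j::nat) (beta::nat \<Rightarrow> real) (alpha::nat \<Rightarrow> real) (M::real).
        j \<ge> 1 \<and> (\<forall>k\<ge>1. beta k \<ge> 0) \<and> inj_on alpha {1..H} \<and> M \<in> {-1, 1} \<and>
        f = (\<lambda>x. \<Sum>k=0..length tau + j - 1. beta k * Bstar H alpha M j tau k x))"

end

theory Submission
  imports Defs
begin

text \<open>Take order-one B-splines (cell indicators), so that \<open>B*\<^sub>k\<close> rises over the \<open>k\<close>-th cell
  like \<open>M \<integral> p\<close> with \<open>p \<xi> = \<Prod>h. \<xi> - \<alpha>\<^sub>h\<close>, and put the change points \<open>\<alpha>\<^sub>h\<close> at the interior local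
  extrema of \<open>f\<^sub>0\<close> (padding with points left of the domain).  Refine these extrema by a fine grid
  to a knot set.  Between consecutive knots \<open>f\<^sub>0\<close> is strictly monotone and \<open>p\<close> has constant
  sign, and both the direction of \<open>f\<^sub>0\<close> and the sign of \<open>p\<close> flip exactly at the extrema, so
  one global sign \<open>M\<close> makes all coefficients \<open>\<beta>\<^sub>k\<close> that interpolate \<open>f\<^sub>0\<close> at the knots
  nonnegative.  On each cell the spline is then a convex combination of the values of \<open>f\<^sub>0\<close>
  at the two end knots, so uniform continuity bounds the error.\<close>

section \<open>Monotonicity and sign between local extrema\<close>

lemma local_extremum_if_extremal_on_interval:
  fixes f :: "real \<Rightarrow> real"
  assumes w: "w \<in> {u<..<v}"
    and extremal: "(\<forall>z\<in>{u..v}. f z \<le> f w) \<or> (\<forall>z\<in>{u..v}. f w \<le> f z)"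
  shows "local_extremum f w"
proof -
  have "y \<in> {u..v}" if "\<bar>y - w\<bar> < min (w - u) (v - w)" for y
    using that by auto
  moreover have "min (w - u) (v - w) > 0"
    using w by auto
  ultimately show ?thesis
    using extremal unfolding local_extremum_def by blast
qed

lemma inj_on_if_no_local_extremum:
  fixes f :: "real \<Rightarrow> real"
  assumes cont: "continuous_on {c..d} f"
    and noext: "\<And>z. z \<in> {c<..<d} \<Longrightarrow> \<not> local_extremum f z"
  shows "inj_on f {c..d}"
proof -
  have no_collision: False if uv: "c \<le> u" "u < v" "v \<le> d" "f u = f v" for u v
  proof -
    have cuv: "continuous_on {u..v} f"
      using cont uv by (auto intro: continuous_on_subset)
    obtain w1 where w1: "w1 \<in> {u..v}" "\<forall>z\<in>{u..v}. f z \<le> f w1"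
      using continuous_attains_sup[OF compact_Icc _ cuv] uv by auto
    obtain w2 where w2: "w2 \<in> {u..v}" "\<forall>z\<in>{u..v}. f w2 \<le> f z"
      using continuous_attains_inf[OF compact_Icc _ cuv] uv by auto
    have not_extremal: False
      if "w \<in> {u<..<v}" "(\<forall>z\<in>{u..v}. f z \<le> f w) \<or> (\<forall>z\<in>{u..v}. f w \<le> f z)" for w
      using local_extremum_if_extremal_on_interval[OF that] noext[of w] that(1) uv by auto
    consider "w1 \<in> {u<..<v}" | "w2 \<in> {u<..<v}" | "w1 \<in> {u, v}" "w2 \<in> {u, v}"
      using w1(1) w2(1) by fastforce
    then show False
    proof cases
      case 3
      \<comment> \<open>maximum and minimum are both attained at the ends, where \<open>f\<close> agrees: \<open>f\<close> is constant\<close>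
      then have "f w1 = f u" "f w2 = f u"
        using uv(4) by auto
      have m: "(u + v) / 2 \<in> {u..v}"
        using uv(2) by auto
      have "\<forall>z\<in>{u..v}. f z \<le> f ((u + v) / 2)"
      proof
        fix z assume "z \<in> {u..v}"
        then have "f z \<le> f w1" "f w2 \<le> f ((u + v) / 2)"
          using w1(2) w2(2) m by auto
        then show "f z \<le> f ((u + v) / 2)"
          using \<open>f w1 = f u\<close> \<open>f w2 = f u\<close> by linarith
      qed
      then show False
        using not_extremal[of "(u + v) / 2"] uv(2) by auto
    qed (use not_extremal w1 w2 in blast)+
  qed
  show ?thesis
  proof (rule inj_onI)
    fix x y assume "x \<in> {c..d}" "y \<in> {c..d}" "f x = f y"
    then show "x = y"
      using no_collision[of x y] no_collision[of y x] by (cases x y rule: linorder_cases) auto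
  qed
qed

lemma strictly_between_if_no_local_extremum:
  fixes f :: "real \<Rightarrow> real"
  assumes "c < y" "y < d" and cont: "continuous_on {c..d} f"
    and noext: "\<And>z. z \<in> {c<..<d} \<Longrightarrow> \<not> local_extremum f z"
  shows "(f c < f y \<and> f y < f d) \<or> (f d < f y \<and> f y < f c)"
  using continuous_inj_imp_mono[OF assms(1,2) cont inj_on_if_no_local_extremum[OF cont noext]] .

lemma increments_same_sign_if_no_local_extremum:
  fixes f :: "real \<Rightarrow> real"
  assumes "c < t" "t < d" and "continuous_on {c..d} f"
    and "\<And>z. z \<in> {c<..<d} \<Longrightarrow> \<not> local_extremum f z"
  shows "0 < (f t - f c) * (f d - f t)"
  using strictly_between_if_no_local_extremum[OF assms] by (auto simp: zero_less_mult_iff)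

lemma increments_opposite_at_local_extremum:
  fixes f :: "real \<Rightarrow> real"
  assumes ct: "c < t" and td: "t < d" and cont: "continuous_on {c..d} f"
    and noext: "\<And>z. z \<in> {c<..<d} - {t} \<Longrightarrow> \<not> local_extremum f z"
    and ext: "local_extremum f t"
  shows "(f t - f c) * (f d - f t) < 0"
proof -
  obtain r where r: "r > 0"
    and extremal: "(\<forall>y. \<bar>y - t\<bar> < r \<longrightarrow> f y \<le> f t) \<or> (\<forall>y. \<bar>y - t\<bar> < r \<longrightarrow> f t \<le> f y)"
    using ext unfolding local_extremum_def by blast
  define s where "s = min r (min (t - c) (d - t)) / 2"
  have s: "0 < s" "s < r" "c < t - s" "t + s < d"
    using r ct td unfolding s_def by (auto simp: min_def field_simps)
  have left: "(f c < f (t - s) \<and> f (t - s) < f t) \<or> (f t < f (t - s) \<and> f (t - s) < f c)"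
    by (rule strictly_between_if_no_local_extremum)
      (use s ct cont noext in \<open>auto intro: continuous_on_subset\<close>)
  have right: "(f t < f (t + s) \<and> f (t + s) < f d) \<or> (f d < f (t + s) \<and> f (t + s) < f t)"
    by (rule strictly_between_if_no_local_extremum)
      (use s td cont noext in \<open>auto intro: continuous_on_subset\<close>)
  have "\<bar>(t - s) - t\<bar> < r" "\<bar>(t + s) - t\<bar> < r"
    using s by auto
  then have "(f (t - s) \<le> f t \<and> f (t + s) \<le> f t) \<or> (f t \<le> f (t - s) \<and> f t \<le> f (t + s))"
    using extremal by blast
  then show ?thesis
    using left right by (auto simp: mult_less_0_iff)
qed

lemma continuous_nonzero_same_sign:
  fixes p :: "real \<Rightarrow> real"
  assumes cont: "continuous_on {c..d} p" and nz: "\<And>z. z \<in> {c<..<d} \<Longrightarrow> p z \<noteq> 0"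
    and z: "z \<in> {c<..<d}" "z' \<in> {c<..<d}"
  shows "0 < p z * p z'"
proof -
  have "connected (p ` {c<..<d})"
    by (rule connected_continuous_image) (use cont in \<open>auto intro: continuous_on_subset\<close>)
  moreover have "0 \<notin> p ` {c<..<d}"
    using nz by force
  ultimately have no_straddle: "\<not> (p x < 0 \<and> 0 < p y)"
    if "x \<in> {c<..<d}" "y \<in> {c<..<d}" for x y
    using that unfolding connected_iff_interval by (meson imageI less_imp_le)
  have "\<not> (p z < 0 \<and> 0 < p z')" "\<not> (p z' < 0 \<and> 0 < p z)"
    using no_straddle z by auto
  then show ?thesis
    using nz z by (auto simp: zero_less_mult_iff neq_iff)
qed

definition changes_sign_at :: "(real \<Rightarrow> real) \<Rightarrow> real \<Rightarrow> bool" where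
  "changes_sign_at p t \<longleftrightarrow> (\<exists>s0>0. \<forall>s. 0 < s \<and> s < s0 \<longrightarrow> p (t - s) * p (t + s) < 0)"

lemma opposite_signs_across_sign_change:
  fixes p :: "real \<Rightarrow> real"
  assumes ct: "c < t" and td: "t < d" and cont: "continuous_on {c..d} p"
    and nz: "\<And>z. z \<in> {c<..<d} - {t} \<Longrightarrow> p z \<noteq> 0"
    and change: "changes_sign_at p t"
  shows "p ((c + t) / 2) * p ((t + d) / 2) < 0"
proof -
  obtain s0 where "s0 > 0" and flip: "\<And>s. 0 < s \<Longrightarrow> s < s0 \<Longrightarrow> p (t - s) * p (t + s) < 0"
    using change unfolding changes_sign_at_def by blast
  define s where "s = min s0 (min (t - c) (d - t)) / 2"
  have s: "0 < s" "s < s0" "c < t - s" "t + s < d"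
    using \<open>s0 > 0\<close> ct td unfolding s_def by (auto simp: min_def field_simps)
  have "0 < p ((c + t) / 2) * p (t - s)"
    by (rule continuous_nonzero_same_sign[of c t])
      (use s ct cont nz in \<open>auto intro: continuous_on_subset\<close>)
  moreover have "0 < p (t + s) * p ((t + d) / 2)"
    by (rule continuous_nonzero_same_sign[of t d])
      (use s td cont nz in \<open>auto intro: continuous_on_subset\<close>)
  moreover have "p (t - s) * p (t + s) < 0"
    using flip s by blast
  ultimately show ?thesis
    by (auto simp: zero_less_mult_iff mult_less_0_iff)
qed

lemma adjacent_cells_same_sign:
  fixes f p :: "real \<Rightarrow> real"
  assumes ct: "c < t" and td: "t < d"
    and cont: "continuous_on {c..d} f" "continuous_on {c..d} p"
    and cells: "\<And>z. z \<in> {c<..<d} - {t} \<Longrightarrow> \<not> local_extremum f z \<and> p z \<noteq> 0"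
    and knot: "(local_extremum f t \<and> changes_sign_at p t) \<or> (\<not> local_extremum f t \<and> p t \<noteq> 0)"
  shows "0 < ((f t - f c) * p ((c + t) / 2)) * ((f d - f t) * p ((t + d) / 2))"
proof -
  have rearrange: "((f t - f c) * p ((c + t) / 2)) * ((f d - f t) * p ((t + d) / 2))
      = ((f t - f c) * (f d - f t)) * (p ((c + t) / 2) * p ((t + d) / 2))"
    by (simp add: algebra_simps)
  from knot show ?thesis
  proof
    assume "local_extremum f t \<and> changes_sign_at p t"
    then have "(f t - f c) * (f d - f t) < 0" "p ((c + t) / 2) * p ((t + d) / 2) < 0"
      using increments_opposite_at_local_extremum[OF ct td cont(1)]
        opposite_signs_across_sign_change[OF ct td cont(2)] cells by auto
    then show ?thesis
      unfolding rearrange by (rule mult_neg_neg)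
  next
    assume "\<not> local_extremum f t \<and> p t \<noteq> 0"
    then have regular: "\<not> local_extremum f z \<and> p z \<noteq> 0" if "z \<in> {c<..<d}" for z
      using cells that by (cases "z = t") auto
    have "0 < (f t - f c) * (f d - f t)"
      using increments_same_sign_if_no_local_extremum[OF ct td cont(1)] regular by blast
    moreover have "0 < p ((c + t) / 2) * p ((t + d) / 2)"
      using continuous_nonzero_same_sign[OF cont(2)] regular ct td by auto
    ultimately show ?thesis
      unfolding rearrange by (rule mult_pos_pos)
  qed
qed

lemma uniform_sign_if_consecutive_same_sign:
  fixes \<sigma> :: "nat \<Rightarrow> real"
  assumes nz: "\<And>k. 1 \<le> k \<Longrightarrow> k < n \<Longrightarrow> \<sigma> k \<noteq> 0"
    and consecutive: "\<And>k. 1 \<le> k \<Longrightarrow> Suc k < n \<Longrightarrow> 0 < \<sigma> k * \<sigma> (Suc k)"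
  shows "\<exists>M\<in>{-1, 1}. \<forall>k. 1 \<le> k \<longrightarrow> k < n \<longrightarrow> 0 < M * \<sigma> k"
proof -
  define M :: real where "M = (if 0 < \<sigma> 1 then 1 else -1)"
  have "0 < M * \<sigma> k" if "1 \<le> k" "k < n" for k
    using that
  proof (induction k rule: dec_induct)
    case base
    then show ?case
      using nz[of 1] by (auto simp: M_def neq_iff)
  next
    case (step k)
    then show ?case
      using consecutive[of k] by (auto simp: zero_less_mult_iff mult_less_0_iff)
  qed
  moreover have "M \<in> {-1, 1}"
    by (simp add: M_def)
  ultimately show ?thesis
    by blast
qed

section \<open>A common sign on all cells of a knot set\<close>

lemma sorted_wrt_less_nth_less_imp_less:
  fixes xs :: "'a::linorder list"
  assumes "sorted_wrt (<) xs" "i < length xs" "xs ! i < xs ! j"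
  shows "i < j"
  using sorted_nth_mono[OF strict_sorted_imp_sorted[OF assms(1)], of j i] assms(2,3)
  by (meson leD not_le_imp_less)

lemma sorted_wrt_less_no_elem_between:
  fixes xs :: "'a::linorder list"
  assumes "sorted_wrt (<) xs" "1 \<le> k" "k < length xs" "z \<in> set xs"
  shows "\<not> (xs ! (k - 1) < z \<and> z < xs ! k)"
proof
  assume between: "xs ! (k - 1) < z \<and> z < xs ! k"
  obtain j where j: "j < length xs" "xs ! j = z"
    using assms(4) by (auto simp: in_set_conv_nth)
  have "k - 1 < j" "j < k"
    using sorted_wrt_less_nth_less_imp_less[OF assms(1)] between j assms(2,3) by auto
  then show False
    by auto
qed

locale adapted_knots =
  fixes a b :: real and tau :: "real list" and E :: "real set" and f p :: "real \<Rightarrow> real"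
  assumes sorted: "sorted_wrt (<) tau" and knots_in: "set tau \<subseteq> {a..b}" and E_knots: "E \<subseteq> set tau"
    and cont: "continuous_on {a..b} f" "continuous_on {a..b} p"
    and regular: "\<And>z. z \<in> {a<..<b} - E \<Longrightarrow> \<not> local_extremum f z \<and> p z \<noteq> 0"
    and extrema: "\<And>e. e \<in> E \<Longrightarrow> local_extremum f e \<and> changes_sign_at p e"
begin

definition cell_trend :: "nat \<Rightarrow> real" where
  "cell_trend k = (f (tau ! k) - f (tau ! (k - 1))) * p ((tau ! (k - 1) + tau ! k) / 2)"

lemma cell_bounds:
  assumes "1 \<le> k" "k < length tau"
  shows "a \<le> tau ! (k - 1) \<and> tau ! (k - 1) < tau ! k \<and> tau ! k \<le> b"
proof -
  have "tau ! (k - 1) \<in> {a..b}" "tau ! k \<in> {a..b}"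
    using subsetD[OF knots_in nth_mem] assms by auto
  then show ?thesis
    using sorted_wrt_nth_less[OF sorted, of "k - 1" k] assms by auto
qed

lemma regular_in_cell:
  assumes k: "1 \<le> k" "k < length tau" and z: "z \<in> {tau ! (k - 1)<..<tau ! k}"
  shows "\<not> local_extremum f z \<and> p z \<noteq> 0"
proof -
  have "z \<notin> set tau"
    using sorted_wrt_less_no_elem_between[OF sorted k] z by auto
  moreover have "z \<in> {a<..<b}"
    using cell_bounds[OF k] z by auto
  ultimately show ?thesis
    using regular E_knots by blast
qed

lemma cell_trend_nonzero:
  assumes k: "1 \<le> k" "k < length tau"
  shows "cell_trend k \<noteq> 0"
proof -
  have "inj_on f {tau ! (k - 1)..tau ! k}"
    by (rule inj_on_if_no_local_extremum)
      (use cont(1) cell_bounds[OF k] regular_in_cell[OF k] in \<open>auto intro: continuous_on_subset\<close>)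
  then have "f (tau ! k) \<noteq> f (tau ! (k - 1))"
    using cell_bounds[OF k] by (auto dest: inj_onD)
  moreover have "p ((tau ! (k - 1) + tau ! k) / 2) \<noteq> 0"
    using regular_in_cell[OF k] cell_bounds[OF k] by auto
  ultimately show ?thesis
    by (simp add: cell_trend_def)
qed

lemma cell_trend_consecutive:
  assumes k: "1 \<le> k" "Suc k < length tau"
  shows "0 < cell_trend k * cell_trend (Suc k)"
proof -
  let ?c = "tau ! (k - 1)" and ?t = "tau ! k" and ?d = "tau ! Suc k"
  have left: "a \<le> ?c \<and> ?c < ?t" and right: "?t < ?d \<and> ?d \<le> b"
    using cell_bounds[of k] cell_bounds[of "Suc k"] k by auto
  then have ctd: "?c < ?t" "?t < ?d"
    by auto
  have "continuous_on {?c..?d} f" "continuous_on {?c..?d} p"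
    using cont left right by (auto intro: continuous_on_subset)
  moreover have "\<not> local_extremum f z \<and> p z \<noteq> 0" if "z \<in> {?c<..<?d} - {?t}" for z
    using regular_in_cell[of k z] regular_in_cell[of "Suc k" z] k that by (cases "z < ?t") auto
  moreover have "?t \<in> {a<..<b}"
    using left right by auto
  then have "(local_extremum f ?t \<and> changes_sign_at p ?t) \<or> (\<not> local_extremum f ?t \<and> p ?t \<noteq> 0)"
    using regular extrema by blast
  ultimately show ?thesis
    unfolding cell_trend_def using adjacent_cells_same_sign[OF ctd] by simp
qed

lemma uniform_sign_on_cells:
  "\<exists>M\<in>{-1, 1}. \<forall>k. 1 \<le> k \<longrightarrow> k < length tau \<longrightarrow>
     (\<forall>z\<in>{tau ! (k - 1)<..<tau ! k}. 0 < M * (f (tau ! k) - f (tau ! (k - 1))) * p z)"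
proof -
  obtain M where M: "M \<in> {-1, 1}" and sign: "\<And>k. 1 \<le> k \<Longrightarrow> k < length tau \<Longrightarrow> 0 < M * cell_trend k"
    using uniform_sign_if_consecutive_same_sign[of "length tau" cell_trend]
      cell_trend_nonzero cell_trend_consecutive by blast
  have "0 < M * (f (tau ! k) - f (tau ! (k - 1))) * p z"
    if k: "1 \<le> k" "k < length tau" and z: "z \<in> {tau ! (k - 1)<..<tau ! k}" for k z
  proof -
    have "0 < p ((tau ! (k - 1) + tau ! k) / 2) * p z"
      by (rule continuous_nonzero_same_sign)
        (use cont(2) cell_bounds[OF k] z regular_in_cell[OF k] in \<open>auto intro: continuous_on_subset\<close>)
    with sign[OF k] show ?thesis
      unfolding cell_trend_def by (auto simp: zero_less_mult_iff mult_less_0_iff)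
  qed
  with M show ?thesis
    by blast
qed

end

section \<open>Fine knot sets\<close>

lemma grid_point_above:
  fixes a b c h :: real and N :: nat
  assumes h: "h > 0" "a + h * real N = b" and c: "a \<le> c" "c < b"
  shows "\<exists>i\<le>N. c < a + h * real i \<and> a + h * real i \<le> c + h"
proof -
  define i where "i = nat \<lfloor>(c - a) / h\<rfloor> + 1"
  have "real i = of_int \<lfloor>(c - a) / h\<rfloor> + 1"
    using h c by (simp add: i_def)
  then have i: "(c - a) / h < real i" "real i \<le> (c - a) / h + 1"
    by linarith+
  have "(c - a) / h < real N"
    using h c by (simp add: field_simps)
  then have "i \<le> N"
    using i(2) by linarith
  moreover have "c < a + h * real i" "a + h * real i \<le> c + h"
    using i h(1) by (simp_all add: field_simps)
  ultimately show ?thesis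
    by blast
qed

lemma mesh_le_if_dense:
  fixes tau :: "real list"
  assumes tau: "sorted_wrt (<) tau" "set tau \<subseteq> {a..b}"
    and dense: "\<And>c. c \<in> {a..<b} \<Longrightarrow> \<exists>g\<in>set tau. c < g \<and> g \<le> c + h"
    and k: "1 \<le> k" "k < length tau"
  shows "tau ! k - tau ! (k - 1) \<le> h"
proof -
  have "tau ! (k - 1) < tau ! k"
    using sorted_wrt_nth_less[OF tau(1), of "k - 1" k] k by auto
  moreover have "tau ! (k - 1) \<in> set tau" "tau ! k \<in> set tau"
    using k by auto
  then have "a \<le> tau ! (k - 1)" "tau ! k \<le> b"
    using tau(2) by auto
  ultimately obtain g where g: "g \<in> set tau" "tau ! (k - 1) < g" "g \<le> tau ! (k - 1) + h"
    using dense[of "tau ! (k - 1)"] by auto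
  have "tau ! k \<le> g"
    using sorted_wrt_less_no_elem_between[OF tau(1) k g(1)] g(2) by auto
  with g(3) show ?thesis
    by simp
qed

lemma exists_fine_knots:
  fixes a b \<delta> :: real and E :: "real set"
  assumes "a < b" "finite E" "E \<subseteq> {a..b}" "\<delta> > 0"
  shows "\<exists>tau. sorted_wrt (<) tau \<and> set tau \<subseteq> {a..b} \<and> a \<in> set tau \<and> b \<in> set tau \<and>
           E \<subseteq> set tau \<and> (\<forall>k. 1 \<le> k \<longrightarrow> k < length tau \<longrightarrow> tau ! k - tau ! (k - 1) < \<delta>)"
proof -
  obtain N :: nat where N: "(b - a) / \<delta> < real N"
    using reals_Archimedean2 by blast
  then have "real N > 0"
    using assms(1,4) by (smt (verit) divide_pos_pos)
  define h where "h = (b - a) / real N"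
  have h: "0 < h" "h < \<delta>" "a + h * real N = b"
    using \<open>real N > 0\<close> assms(1,4) N by (auto simp: h_def field_simps)
  define G where "G = (\<lambda>i. a + h * real i) ` {..N}"
  have "a + h * real i \<le> b" if "i \<le> N" for i
    using h mult_left_mono[of "real i" "real N" h] that by auto
  then have G_sub: "G \<subseteq> {a..b}"
    using h(1) by (auto simp: G_def)
  have "a \<in> G"
    unfolding G_def by (rule image_eqI[of _ _ 0]) auto
  have "b \<in> G"
    unfolding G_def by (rule image_eqI[of _ _ N]) (use h(3) in auto)
  define tau where "tau = sorted_list_of_set (E \<union> G)"
  have set_tau: "set tau = E \<union> G" and sorted: "sorted_wrt (<) tau"
    using assms(2) by (auto simp: tau_def G_def)
  have sub: "set tau \<subseteq> {a..b}"
    using set_tau G_sub assms(3) by auto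
  have dense: "\<exists>g\<in>set tau. c < g \<and> g \<le> c + h" if c: "c \<in> {a..<b}" for c
  proof -
    obtain i where "i \<le> N" "c < a + h * real i" "a + h * real i \<le> c + h"
      using grid_point_above[OF h(1,3)] c by auto
    moreover have "a + h * real i \<in> set tau"
      using \<open>i \<le> N\<close> by (auto simp: set_tau G_def)
    ultimately show ?thesis
      by blast
  qed
  have "tau ! k - tau ! (k - 1) < \<delta>" if "1 \<le> k" "k < length tau" for k
    using mesh_le_if_dense[OF sorted sub dense that] h(2) by simp
  then show ?thesis
    using sorted sub set_tau \<open>a \<in> G\<close> \<open>b \<in> G\<close>
    by (intro exI[of _ tau] conjI allI impI) auto
qed

lemma obtain_cell_containing:
  fixes tau :: "real list"
  assumes tau: "sorted_wrt (<) tau" "set tau \<subseteq> {a..b}" "a \<in> set tau" "b \<in> set tau"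
    and "a < b" and x: "x \<in> {a..b}"
  obtains i where "1 \<le> i" "i < length tau" "tau ! (i - 1) \<le> x" "x \<le> tau ! i"
proof -
  let ?L = "length tau"
  have mono: "tau ! i \<le> tau ! j" if "i \<le> j" "j < ?L" for i j
    using sorted_nth_mono[OF strict_sorted_imp_sorted[OF tau(1)] that] .
  obtain ia ib where ia: "ia < ?L" "tau ! ia = a" and ib: "ib < ?L" "tau ! ib = b"
    using tau(3,4) by (auto simp: in_set_conv_nth)
  have "ia \<noteq> ib"
    using ia ib \<open>a < b\<close> by auto
  then have L: "1 < ?L"
    using ia ib by linarith
  have "tau ! 0 \<in> set tau"
    using L by (intro nth_mem) linarith
  then have first: "tau ! 0 = a"
    using mono[of 0 ia] ia tau(2) by auto
  have "tau ! ib \<le> tau ! (?L - 1)"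
    using ib(1) by (intro mono) auto
  then have "x \<le> tau ! (?L - 1)"
    using ib(2) x by auto
  then have ex: "\<exists>j. 0 < j \<and> j < ?L \<and> x \<le> tau ! j"
    using L by (intro exI[of _ "?L - 1"]) auto
  define i where "i = (LEAST j. 0 < j \<and> j < ?L \<and> x \<le> tau ! j)"
  have i: "0 < i" "i < ?L" "x \<le> tau ! i"
    using LeastI_ex[OF ex] by (auto simp: i_def)
  have "tau ! (i - 1) \<le> x"
  proof (cases "i = 1")
    case True
    then show ?thesis
      using first x by simp
  next
    case False
    then have "\<not> (0 < i - 1 \<and> i - 1 < ?L \<and> x \<le> tau ! (i - 1))"
      using not_less_Least[of "i - 1" "\<lambda>j. 0 < j \<and> j < ?L \<and> x \<le> tau ! j"] i(1)
      by (auto simp: i_def)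
    then show ?thesis
      using i False by auto
  qed
  with i show ?thesis
    by (intro that) auto
qed

section \<open>Interpolating local extrema splines of order one\<close>

definition change_poly :: "nat \<Rightarrow> (nat \<Rightarrow> real) \<Rightarrow> real \<Rightarrow> real" where
  "change_poly H alpha \<xi> = (\<Prod>h=1..H. \<xi> - alpha h)"

lemma continuous_on_change_poly: "continuous_on S (change_poly H alpha)"
  unfolding change_poly_def by (intro continuous_intros)

lemma integral_atMost_times_indicator:
  fixes P :: "real \<Rightarrow> real"
  assumes "c \<le> d"
  shows "integral {..x} (\<lambda>\<xi>. P \<xi> * (if c \<le> \<xi> \<and> \<xi> < d then 1 else 0)) =
         integral {c..max c (min x d)} P"
proof -
  have "integral {..x} (\<lambda>\<xi>. P \<xi> * (if c \<le> \<xi> \<and> \<xi> < d then 1 else 0)) =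
        integral {..x} (\<lambda>\<xi>. if \<xi> \<in> {c..<d} then P \<xi> else 0)"
    by (rule integral_cong) auto
  also have "\<dots> = integral ({c..<d} \<inter> {..x}) P"
    by (rule integral_restrict_Int)
  also have "\<dots> = integral {c..max c (min x d)} P"
  proof (rule integral_spike_set)
    show "negligible {\<xi> \<in> {c..<d} \<inter> {..x} - {c..max c (min x d)}. P \<xi> \<noteq> 0}"
      by (rule negligible_subset[of "{}"]) auto
    show "negligible {\<xi> \<in> {c..max c (min x d)} - {c..<d} \<inter> {..x}. P \<xi> \<noteq> 0}"
      by (rule negligible_subset[of "{c, d}"]) (auto simp: max_def min_def split: if_splits)
  qed
  finally show ?thesis .
qed

lemma Bsp_order1:
  assumes "1 \<le> k" "k < length tau"
  shows "Bsp 1 tau k \<xi> = (if tau ! (k - 1) \<le> \<xi> \<and> \<xi> < tau ! k then 1 else 0)"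
proof -
  have "min (length tau - 1) (k - 1) = k - 1" "min (length tau - 1) k = k" "Suc (k - 1) = k"
    using assms by auto
  then show ?thesis
    by (simp add: Bsp_def ext_knots_def)
qed

lemma Bstar_order1:
  assumes "1 \<le> k" "k < length tau" "sorted tau"
  shows "Bstar H alpha M 1 tau k x =
    M * integral {tau ! (k - 1)..max (tau ! (k - 1)) (min x (tau ! k))} (change_poly H alpha)"
proof -
  have "tau ! (k - 1) \<le> tau ! k"
    using assms by (intro sorted_nth_mono) auto
  then show ?thesis
    unfolding Bstar_def change_poly_def using assms Bsp_order1[OF assms(1,2)]
    by (simp add: integral_atMost_times_indicator)
qed

text \<open>The coefficients are chosen so that the order-one spline interpolates \<open>f\<close> at the knots:
  over the \<open>k\<close>-th cell \<open>B*\<^sub>k\<close> rises by \<open>M\<close> times the integral of \<open>p\<close> over that cell.\<close>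
definition interp_coeff :: "(real \<Rightarrow> real) \<Rightarrow> (real \<Rightarrow> real) \<Rightarrow> real \<Rightarrow> real list \<Rightarrow> nat \<Rightarrow> real" where
  "interp_coeff f p M tau k =
     (if k = 0 then f (tau ! 0)
      else if k < length tau then (f (tau ! k) - f (tau ! (k - 1))) / (M * integral {tau ! (k - 1)..tau ! k} p)
      else 0)"

lemma sum_increments_prefix:
  fixes g :: "nat \<Rightarrow> real"
  assumes "1 \<le> i" "i < n"
  shows "(\<Sum>k\<in>{1..<n}. if k < i then g k - g (k - 1) else if k = i then c else 0) = g (i - 1) - g 0 + c"
proof -
  have "(\<Sum>k\<in>{1..<m}. g k - g (k - 1)) = g (m - 1) - g 0" if "1 \<le> m" for m
    using that by (induction m rule: dec_induct) (simp_all add: sum.op_ivl_Suc)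
  moreover have "Suc i \<le> n"
    using assms by simp
  then have "(\<Sum>k\<in>{1..<n}. if k < i then g k - g (k - 1) else if k = i then c else 0)
      = (\<Sum>k\<in>{1..<i}. g k - g (k - 1)) + c"
  proof (induction n rule: dec_induct)
    case base
    have "(\<Sum>k\<in>{1..<i}. if k < i then g k - g (k - 1) else if k = i then c else 0)
        = (\<Sum>k\<in>{1..<i}. g k - g (k - 1))"
      by (rule sum.cong) auto
    then show ?case
      using assms(1) by (simp add: sum.op_ivl_Suc)
  qed (use assms(1) in \<open>simp add: sum.op_ivl_Suc\<close>)
  ultimately show ?thesis
    using assms(1) by simp
qed

lemma interp_coeff_times_Bstar_order1:
  fixes tau :: "real list" and H :: nat and alpha :: "nat \<Rightarrow> real"
  defines "p \<equiv> change_poly H alpha"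
  assumes tau: "sorted_wrt (<) tau" and M: "M \<in> {-1, 1}"
    and k: "1 \<le> k" "k < length tau" and i: "i < length tau" and x: "x \<in> {tau ! (i - 1)..tau ! i}"
    and nz: "k < i \<Longrightarrow> integral {tau ! (k - 1)..tau ! k} p \<noteq> 0"
  shows "interp_coeff f p M tau k * Bstar H alpha M 1 tau k x =
      (if k < i then f (tau ! k) - f (tau ! (k - 1))
       else if k = i then integral {tau ! (i - 1)..x} p / integral {tau ! (i - 1)..tau ! i} p
                          * (f (tau ! i) - f (tau ! (i - 1)))
       else 0)"
proof -
  have mono: "tau ! l \<le> tau ! l'" if "l \<le> l'" "l' < length tau" for l l'
    using sorted_nth_mono[OF strict_sorted_imp_sorted[OF tau] that] .
  let ?upper = "max (tau ! (k - 1)) (min x (tau ! k))"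
  have "interp_coeff f p M tau k * Bstar H alpha M 1 tau k x
      = (f (tau ! k) - f (tau ! (k - 1))) / integral {tau ! (k - 1)..tau ! k} p * integral {tau ! (k - 1)..?upper} p"
    using Bstar_order1[OF k strict_sorted_imp_sorted[OF tau]] k M
    by (auto simp: interp_coeff_def p_def)
  moreover consider "k < i" | "k = i" | "i < k"
    by linarith
  then have "?upper = (if k < i then tau ! k else if k = i then x else tau ! (k - 1))"
  proof cases
    case 1
    then have "tau ! k \<le> tau ! (i - 1)"
      using i by (intro mono) auto
    moreover have "tau ! (k - 1) \<le> tau ! k"
      using k by (intro mono) auto
    ultimately show ?thesis
      using 1 x by auto
  next
    case 3
    then have "tau ! i \<le> tau ! (k - 1)"
      using k by (intro mono) auto
    then show ?thesis
      using 3 x by auto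
  qed (use x in auto)
  ultimately show ?thesis
    using nz by auto
qed

lemma interp_spline_eq:
  fixes tau :: "real list" and H :: nat and alpha :: "nat \<Rightarrow> real"
  defines "p \<equiv> change_poly H alpha"
  assumes tau: "sorted_wrt (<) tau" and M: "M \<in> {-1, 1}"
    and i: "1 \<le> i" "i < length tau" and x: "x \<in> {tau ! (i - 1)..tau ! i}"
    and nz: "\<And>k. 1 \<le> k \<Longrightarrow> k < i \<Longrightarrow> integral {tau ! (k - 1)..tau ! k} p \<noteq> 0"
  shows "(\<Sum>k=0..length tau. interp_coeff f p M tau k * Bstar H alpha M 1 tau k x)
       = f (tau ! (i - 1))
         + integral {tau ! (i - 1)..x} p / integral {tau ! (i - 1)..tau ! i} p * (f (tau ! i) - f (tau ! (i - 1)))"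
proof -
  let ?L = "length tau"
  let ?r = "integral {tau ! (i - 1)..x} p / integral {tau ! (i - 1)..tau ! i} p"
  have "{0..?L} = insert 0 (insert ?L {1..<?L})"
    by auto
  moreover have "0 \<notin> insert ?L {1..<?L}" "?L \<notin> {1..<?L}"
    using i by auto
  ultimately have "(\<Sum>k=0..?L. interp_coeff f p M tau k * Bstar H alpha M 1 tau k x)
      = interp_coeff f p M tau 0 * Bstar H alpha M 1 tau 0 x
        + (interp_coeff f p M tau ?L * Bstar H alpha M 1 tau ?L x
        + (\<Sum>k\<in>{1..<?L}. interp_coeff f p M tau k * Bstar H alpha M 1 tau k x))"
    by simp
  also have "\<dots> = f (tau ! 0) + (\<Sum>k\<in>{1..<?L}. interp_coeff f p M tau k * Bstar H alpha M 1 tau k x)"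
    using i by (auto simp: interp_coeff_def Bstar_def)
  also have "\<dots> = f (tau ! 0) + (\<Sum>k\<in>{1..<?L}. if k < i then f (tau ! k) - f (tau ! (k - 1))
      else if k = i then ?r * (f (tau ! i) - f (tau ! (i - 1))) else 0)"
    using interp_coeff_times_Bstar_order1[OF tau M _ _ i(2) x] nz unfolding p_def
    by (intro arg_cong2[where f = "(+)"] sum.cong) auto
  also have "\<dots> = f (tau ! (i - 1)) + ?r * (f (tau ! i) - f (tau ! (i - 1)))"
    using sum_increments_prefix[OF i, of "\<lambda>k. f (tau ! k)"] by simp
  finally show ?thesis
    by simp
qed

lemma interpolant_error_less:
  fixes y u v r e :: real
  assumes r: "0 \<le> r" "r \<le> 1" and close: "\<bar>y - u\<bar> < e" "\<bar>y - v\<bar> < e"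
  shows "\<bar>y - (u + r * (v - u))\<bar> < e"
proof -
  have "\<bar>y - (u + r * (v - u))\<bar> = \<bar>(1 - r) * (y - u) + r * (y - v)\<bar>"
    by (simp add: algebra_simps)
  also have "\<dots> \<le> (1 - r) * \<bar>y - u\<bar> + r * \<bar>y - v\<bar>"
    using abs_triangle_ineq[of "(1 - r) * (y - u)" "r * (y - v)"] r by (simp add: abs_mult)
  also have "\<dots> < e"
    using r close by (intro convex_bound_lt) auto
  finally show ?thesis .
qed

lemma signed_integral_pos:
  fixes q :: "real \<Rightarrow> real"
  assumes "c < d" "continuous_on {c..d} q" "\<And>z. z \<in> {c<..<d} \<Longrightarrow> 0 < \<kappa> * q z"
  shows "0 < \<kappa> * integral {c..d} q"
  using integral_less[of c d "\<lambda>_. 0" "\<lambda>z. \<kappa> * q z"] assms by (simp add: continuous_intros)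

lemma integral_partial_ratio_bounds:
  fixes q :: "real \<Rightarrow> real"
  assumes cd: "c < d" and cont: "continuous_on {c..d} q"
    and pos: "\<And>z. z \<in> {c<..<d} \<Longrightarrow> 0 < \<kappa> * q z" and x: "x \<in> {c..d}"
  shows "0 \<le> integral {c..x} q / integral {c..d} q \<and> integral {c..x} q / integral {c..d} q \<le> 1"
proof -
  let ?q = "\<lambda>z. \<kappa> * q z"
  have "?q integrable_on {c..x}" "?q integrable_on {c..d}"
    using x by (auto intro!: integrable_continuous_interval continuous_on_subset[OF cont] continuous_intros)
  then have int: "?q integrable_on {c<..<x}" "?q integrable_on {c<..<d}"
    by (simp_all add: integrable_on_open_interval_real)
  have "0 \<le> integral {c<..<x} ?q"
    using x by (intro integral_nonneg int) (auto intro!: less_imp_le[OF pos])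
  moreover have "integral {c<..<x} ?q \<le> integral {c<..<d} ?q"
    using pos x by (intro integral_subset_le int) (auto simp: less_imp_le)
  ultimately have "0 \<le> \<kappa> * integral {c..x} q" "\<kappa> * integral {c..x} q \<le> \<kappa> * integral {c..d} q"
    by (simp_all add: integral_open_interval_real)
  moreover have "0 < \<kappa> * integral {c..d} q"
    using signed_integral_pos[OF cd cont pos] .
  ultimately show ?thesis
    by (auto simp: zero_less_mult_iff zero_le_mult_iff divide_simps mult_le_cancel_left)
qed

lemma interp_coeff_nonneg:
  assumes M: "M \<in> {-1, 1}" and "1 \<le> k"
    and pos: "k < length tau \<Longrightarrow>
      0 < M * (f (tau ! k) - f (tau ! (k - 1))) * integral {tau ! (k - 1)..tau ! k} p"
  shows "0 \<le> interp_coeff f p M tau k"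
proof (cases "k < length tau")
  case True
  let ?I = "integral {tau ! (k - 1)..tau ! k} p"
  have "?I \<noteq> 0"
    using pos[OF True] by auto
  then have coeff: "interp_coeff f p M tau k = M * (f (tau ! k) - f (tau ! (k - 1))) * ?I / (?I * ?I)"
    using True \<open>1 \<le> k\<close> M by (auto simp: interp_coeff_def field_simps)
  show ?thesis
    unfolding coeff using pos[OF True] by (intro divide_nonneg_nonneg) auto
qed (use \<open>1 \<le> k\<close> in \<open>simp add: interp_coeff_def\<close>)

lemma lx_spline_interpolant_approx:
  fixes f :: "real \<Rightarrow> real" and tau :: "real list"
  assumes tau: "sorted_wrt (<) tau" "set tau \<subseteq> {a..b}" "a \<in> set tau" "b \<in> set tau" "a < b"
    and alpha: "inj_on alpha {1..H}" and M: "M \<in> {-1, 1}"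
    and sign: "\<And>k z. 1 \<le> k \<Longrightarrow> k < length tau \<Longrightarrow> z \<in> {tau ! (k - 1)<..<tau ! k} \<Longrightarrow>
        0 < M * (f (tau ! k) - f (tau ! (k - 1))) * change_poly H alpha z"
    and mesh: "\<And>k. 1 \<le> k \<Longrightarrow> k < length tau \<Longrightarrow> tau ! k - tau ! (k - 1) < \<delta>"
    and close: "\<And>x y. x \<in> {a..b} \<Longrightarrow> y \<in> {a..b} \<Longrightarrow> \<bar>x - y\<bar> < \<delta> \<Longrightarrow> \<bar>f x - f y\<bar> < e"
  shows "\<exists>fLX. lx_spline H tau fLX \<and> (\<forall>x\<in>{a..b}. \<bar>f x - fLX x\<bar> < e)"
proof -
  let ?L = "length tau" and ?p = "change_poly H alpha"
  have cell: "tau ! (k - 1) < tau ! k" if "1 \<le> k" "k < ?L" for k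
    using sorted_wrt_nth_less[OF tau(1), of "k - 1" k] that by auto
  note cont_p = continuous_on_change_poly
  have pos: "0 < M * (f (tau ! k) - f (tau ! (k - 1))) * integral {tau ! (k - 1)..tau ! k} ?p"
    if k: "1 \<le> k" "k < ?L" for k
    using signed_integral_pos[OF cell[OF k] cont_p sign[OF k]] .
  define fLX where "fLX x = (\<Sum>k=0..?L. interp_coeff f ?p M tau k * Bstar H alpha M 1 tau k x)" for x
  have "2 \<le> ?L"
    using card_mono[of "set tau" "{a, b}"] card_length[of tau] tau(3-5) by fastforce
  then have "lx_spline H tau fLX"
    unfolding lx_spline_def using strict_sorted_imp_sorted[OF tau(1)] alpha M interp_coeff_nonneg[OF M _ pos]
    by (intro conjI exI[of _ 1] exI[of _ "interp_coeff f ?p M tau"] exI[of _ alpha] exI[of _ M])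
      (auto simp: fLX_def)
  moreover have "\<bar>f x - fLX x\<bar> < e" if x: "x \<in> {a..b}" for x
  proof -
    obtain i where i: "1 \<le> i" "i < ?L" and x_cell: "x \<in> {tau ! (i - 1)..tau ! i}"
      using obtain_cell_containing[OF tau x] by auto
    let ?r = "integral {tau ! (i - 1)..x} ?p / integral {tau ! (i - 1)..tau ! i} ?p"
    have spline_value: "fLX x = f (tau ! (i - 1)) + ?r * (f (tau ! i) - f (tau ! (i - 1)))"
      unfolding fLX_def using pos i by (intro interp_spline_eq[OF tau(1) M i x_cell]) force
    have r: "0 \<le> ?r" "?r \<le> 1"
      using integral_partial_ratio_bounds[OF cell[OF i] cont_p sign[OF i] x_cell] by auto
    have "tau ! (i - 1) \<in> {a..b}" "tau ! i \<in> {a..b}"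
      using subsetD[OF tau(2) nth_mem] i by auto
    then have "\<bar>f x - f (tau ! (i - 1))\<bar> < e" "\<bar>f x - f (tau ! i)\<bar> < e"
      using close x x_cell mesh[OF i] by auto
    then show ?thesis
      unfolding spline_value by (rule interpolant_error_less[OF r])
  qed
  ultimately show ?thesis
    by blast
qed

section \<open>Change points at the local extrema\<close>

text \<open>The first \<open>card E\<close> change points enumerate \<open>E\<close> in increasing order; the remaining ones
  lie left of \<open>a\<close>, where they do not affect the sign of the polynomial on the domain.\<close>
definition change_points :: "real set \<Rightarrow> real \<Rightarrow> nat \<Rightarrow> real" where
  "change_points E a h = (if h \<le> card E then sorted_list_of_set E ! (h - 1) else a - real h)"

lemma change_points_in:
  assumes "finite E" "1 \<le> h" "h \<le> card E"
  shows "change_points E a h \<in> E"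
  using assms nth_mem[of "h - 1" "sorted_list_of_set E"] by (auto simp: change_points_def)

lemma inj_on_change_points:
  assumes E: "finite E" "\<And>e. e \<in> E \<Longrightarrow> a < e"
  shows "inj_on (change_points E a) {1..}"
proof (rule inj_onI)
  fix h h' assume h: "h \<in> {1..}" "h' \<in> {1..}" and eq: "change_points E a h = change_points E a h'"
  have left: "change_points E a g < a" if "\<not> g \<le> card E" "1 \<le> g" for g
    using that by (simp add: change_points_def)
  have right: "a < change_points E a g" if "g \<le> card E" "1 \<le> g" for g
    using change_points_in[OF E(1) that(2,1)] E(2) by blast
  consider "h \<le> card E" "h' \<le> card E" | "\<not> h \<le> card E" "\<not> h' \<le> card E"
    | "h \<le> card E \<longleftrightarrow> \<not> h' \<le> card E"
    by blast
  then show "h = h'"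
  proof cases
    case 1
    then have "sorted_list_of_set E ! (h - 1) = sorted_list_of_set E ! (h' - 1)"
      using eq by (simp add: change_points_def)
    moreover have "h - 1 < length (sorted_list_of_set E)" "h' - 1 < length (sorted_list_of_set E)"
      using 1 h by auto
    ultimately have "h - 1 = h' - 1"
      using nth_eq_iff_index_eq[of "sorted_list_of_set E"] by simp
    then show ?thesis
      using h by simp
  next
    case 2
    then show ?thesis
      using eq by (simp add: change_points_def)
  next
    case 3
    then show ?thesis
      using left[of h] left[of h'] right[of h] right[of h'] eq h by force
  qed
qed

lemma change_poly_root_in:
  assumes E: "finite E" "\<And>e. e \<in> E \<Longrightarrow> a < e"
    and z: "a < z" "change_poly H (change_points E a) z = 0"
  shows "z \<in> E"
proof -
  obtain h where h: "h \<in> {1..H}" "z = change_points E a h"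
    using z(2) by (auto simp: change_poly_def prod_zero_iff)
  show ?thesis
  proof (cases "h \<le> card E")
    case True
    then show ?thesis
      using change_points_in[OF E(1)] h by auto
  next
    case False
    then show ?thesis
      using h z(1) by (simp add: change_points_def)
  qed
qed

lemma changes_sign_at_simple_root:
  assumes inj: "inj_on alpha {1..H}" and h0: "h0 \<in> {1..H}"
  shows "changes_sign_at (change_poly H alpha) (alpha h0)"
proof -
  define e where "e = alpha h0"
  define r where "r z = (\<Prod>h\<in>{1..H} - {h0}. z - alpha h)" for z
  have factor: "change_poly H alpha z = (z - e) * r z" for z
    unfolding change_poly_def r_def e_def using prod.remove[of "{1..H}" h0] h0 by simp
  have "r e \<noteq> 0"
    using inj h0 by (auto simp: r_def e_def prod_zero_iff dest: inj_onD)
  moreover have "isCont r e"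
    unfolding r_def by (intro continuous_intros)
  ultimately obtain d where d: "d > 0" "\<And>z. dist z e < d \<Longrightarrow> dist (r z) (r e) < \<bar>r e\<bar>"
    unfolding continuous_at_eps_delta by (metis zero_less_abs_iff)
  have near: "0 < r z * r e" if "\<bar>z - e\<bar> < d" for z
  proof -
    have "\<bar>r z - r e\<bar> < \<bar>r e\<bar>"
      using d(2)[of z] that by (simp add: dist_real_def)
    then show ?thesis
      by (cases "r e > 0") (auto simp: abs_if zero_less_mult_iff split: if_splits)
  qed
  have "change_poly H alpha (e - s) * change_poly H alpha (e + s) < 0" if s: "0 < s" "s < d" for s
  proof -
    have "0 < (r (e - s) * r e) * (r (e + s) * r e)"
      using near[of "e - s"] near[of "e + s"] s by simp
    then have "0 < (r (e - s) * r (e + s)) * (r e * r e)"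
      by (simp add: algebra_simps)
    then have "0 < r (e - s) * r (e + s)"
      by (simp add: zero_less_mult_iff)
    moreover have "change_poly H alpha (e - s) * change_poly H alpha (e + s) = - (s * s) * (r (e - s) * r (e + s))"
      unfolding factor by (simp add: algebra_simps)
    ultimately show ?thesis
      using s by (simp add: mult_pos_pos)
  qed
  then show ?thesis
    unfolding changes_sign_at_def e_def using d(1) by blast
qed

lemma changes_sign_at_change_points:
  assumes E: "finite E" "card E \<le> H" and e: "e \<in> E"
    and above: "\<And>e. e \<in> E \<Longrightarrow> a < e"
  shows "changes_sign_at (change_poly H (change_points E a)) e"
proof -
  obtain i where i: "i < card E" "sorted_list_of_set E ! i = e"
    using e E(1) by (metis in_set_conv_nth length_sorted_list_of_set set_sorted_list_of_set)
  then have "change_points E a (Suc i) = e"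
    by (simp add: change_points_def)
  moreover have "inj_on (change_points E a) {1..H}"
    using inj_on_change_points[OF E(1) above] by (rule inj_on_subset) auto
  ultimately show ?thesis
    using changes_sign_at_simple_root[of "change_points E a" H "Suc i"] i E(2) by auto
qed

lemma adapted_knots_change_points:
  assumes E: "E = {x \<in> {a<..<b}. local_extremum f x}" "finite E" "card E \<le> H"
    and tau: "sorted_wrt (<) tau" "set tau \<subseteq> {a..b}" "E \<subseteq> set tau"
    and cont: "continuous_on {a..b} f"
  shows "adapted_knots a b tau E f (change_poly H (change_points E a))"
proof
  have above: "a < e" if "e \<in> E" for e
    using that E(1) by simp
  show "\<not> local_extremum f z \<and> change_poly H (change_points E a) z \<noteq> 0" if "z \<in> {a<..<b} - E" for z
    using that change_poly_root_in[OF E(2) above] E(1) by auto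
  show "local_extremum f e \<and> changes_sign_at (change_poly H (change_points E a)) e" if "e \<in> E" for e
    using that changes_sign_at_change_points[OF E(2,3) _ above] E(1) by auto
qed (use tau cont continuous_on_change_poly in auto)

lemma FH_continuous_extrema:
  assumes "f \<in> FH H {a..b}"
  shows "continuous_on {a..b} f" "finite {x \<in> {a<..<b}. local_extremum f x}"
    "card {x \<in> {a<..<b}. local_extremum f x} \<le> H"
proof -
  obtain f' where "\<forall>x\<in>{a..b}. (f has_real_derivative f' x) (at x within {a..b})"
    using assms unfolding FH_def C1_on_def by blast
  then show "continuous_on {a..b} f"
    by (intro DERIV_continuous_on) blast
  show "finite {x \<in> {a<..<b}. local_extremum f x}" "card {x \<in> {a<..<b}. local_extremum f x} \<le> H"
    using assms by (auto simp: FH_def)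
qed

theorem theorem1:
  fixes a b :: real and H :: nat and f0 :: "real \<Rightarrow> real" and \<epsilon> :: real
  assumes "a < b" and "H \<ge> 1" and "f0 \<in> FH H {a..b}" and "\<epsilon> > 0"
  shows "\<exists>tau fLX. lx_spline H tau fLX \<and>
           (SUP x\<in>{a..b}. \<bar>f0 x - fLX x\<bar>) < \<epsilon>"
proof -
  define E where "E = {x \<in> {a<..<b}. local_extremum f0 x}"
  note f0 = FH_continuous_extrema[OF assms(3), folded E_def]
  obtain \<delta> where "\<delta> > 0"
    and close: "\<And>x y. x \<in> {a..b} \<Longrightarrow> y \<in> {a..b} \<Longrightarrow> \<bar>x - y\<bar> < \<delta> \<Longrightarrow> \<bar>f0 x - f0 y\<bar> < \<epsilon> / 2"
    using compact_uniformly_continuous[OF f0(1) compact_Icc] assms(4)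
    unfolding uniformly_continuous_on_def dist_real_def by (metis half_gt_zero)
  have "E \<subseteq> {a..b}"
    by (auto simp: E_def)
  then obtain tau where tau: "sorted_wrt (<) tau" "set tau \<subseteq> {a..b}" "a \<in> set tau" "b \<in> set tau"
    "E \<subseteq> set tau" and mesh: "\<And>k. 1 \<le> k \<Longrightarrow> k < length tau \<Longrightarrow> tau ! k - tau ! (k - 1) < \<delta>"
    using exists_fine_knots[OF assms(1) f0(2) _ \<open>\<delta> > 0\<close>] by blast
  interpret adapted_knots a b tau E f0 "change_poly H (change_points E a)"
    using adapted_knots_change_points[OF E_def f0(2,3) tau(1,2,5) f0(1)] .
  obtain M where M: "M \<in> {-1, 1}" and sign: "\<And>k z. 1 \<le> k \<Longrightarrow> k < length tau \<Longrightarrow> z \<in> {tau ! (k - 1)<..<tau ! k} \<Longrightarrow>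
      0 < M * (f0 (tau ! k) - f0 (tau ! (k - 1))) * change_poly H (change_points E a) z"
    using uniform_sign_on_cells by blast
  have inj: "inj_on (change_points E a) {1..H}"
    using inj_on_change_points[OF f0(2), of a] by (rule inj_on_subset) (auto simp: E_def)
  obtain fLX where "lx_spline H tau fLX" and approx: "\<forall>x\<in>{a..b}. \<bar>f0 x - fLX x\<bar> < \<epsilon> / 2"
    using lx_spline_interpolant_approx[OF tau(1-4) assms(1) inj M sign mesh close] by blast
  moreover have "(SUP x\<in>{a..b}. \<bar>f0 x - fLX x\<bar>) \<le> \<epsilon> / 2"
    using assms(1) approx by (intro cSUP_least) (auto simp: less_imp_le)
  ultimately show ?thesis
    using assms(4) by (intro exI[of _ tau] exI[of _ fLX]) auto
qed

end
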